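(* Let $V$ be a finite dimensional real vector space, let $\mathscr C$ be a collection of cones in $V$ each containing $0$, and let $S$ be a closed convex subset of $V$. If $\mathcal C_S\subseteq\bigcup_{\Gamma\in\mathscr C}\mathcal C_\Gamma$, then $S=\bigcap_{\Gamma\in\mathscr C}(S+\Gamma)$.
   Context: A cone in $V$ is a subset closed under multiplication by positive reals. For $S\subseteq V$, the support function is $H_S:V^*\to\mathbb R\cup\{\pm\infty\}$, $H_S(\lambda)=\sup_{x\in S}\lambda(x)$, and $\mathcal C_S=\{\lambda\in V^*:H_S(\lambda)<\infty\}$. *)

theory Defs
  imports "HOL-Analysis.Analysis"
begin

definition pos_cone :: "'a::real_vector set \<Rightarrow> bool" where
  "pos_cone \<Gamma> \<longleftrightarrow> (\<forall>x\<in>\<Gamma>. \<forall>c::real. c > 0 \<longrightarrow> c *\<^sub>R x \<in> \<Gamma>)"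

definition dual_space :: "('a::real_vector \<Rightarrow> real) set" where
  "dual_space = {l. linear l}"

definition support_fun :: "'a::real_vector set \<Rightarrow> ('a \<Rightarrow> real) \<Rightarrow> ereal" where
  "support_fun S l = (SUP x\<in>S. ereal (l x))"

definition fin_support :: "'a::real_vector set \<Rightarrow> ('a \<Rightarrow> real) set" where
  "fin_support S = {l \<in> dual_space. support_fun S l < \<infinity>}"

definition minkowski_sum :: "'a::real_vector set \<Rightarrow> 'a set \<Rightarrow> 'a set" where
  "minkowski_sum A B = {x + y | x y. x \<in> A \<and> y \<in> B}"

end

theory Submission
  imports Defs
begin

text \<open>
  Every cone \<Gamma> containing 0 gives \<open>S \<subseteq> S + \<Gamma>\<close>. Conversely, a point outside the closed convex
  set S is strictly separated from S by a linear functional l bounded above on S. By hypothesis l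
  is also bounded above on some cone \<Gamma> of the collection; being positively homogeneous, it is
  then nonpositive on \<Gamma>, so the separating bound persists on \<open>S + \<Gamma>\<close>, which therefore misses
  the point as well.
\<close>

lemma subset_minkowski_sum_if_zero_mem:
  assumes "0 \<in> \<Gamma>"
  shows "S \<subseteq> minkowski_sum S \<Gamma>"
  using assms unfolding minkowski_sum_def by force

lemma fin_support_if_bounded_above:
  assumes "linear l" and "\<forall>x\<in>S. l x \<le> c"
  shows "l \<in> fin_support S"
proof -
  have "support_fun S l \<le> ereal c"
    unfolding support_fun_def using assms(2) by (auto intro: SUP_least)
  then show ?thesis
    using assms(1) unfolding fin_support_def dual_space_def by (auto intro: le_less_trans)
qed

lemma fin_support_pos_cone_nonpos:
  assumes "pos_cone \<Gamma>" and l: "l \<in> fin_support \<Gamma>" and "g \<in> \<Gamma>"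
  shows "l g \<le> 0"
proof (rule ccontr)
  assume "\<not> l g \<le> 0"
  then have pos: "l g > 0" by simp
  have lin: "linear l" using l unfolding fin_support_def dual_space_def by simp
  obtain M where M: "support_fun \<Gamma> l \<le> ereal M"
    using l unfolding fin_support_def by (cases "support_fun \<Gamma> l") auto
  define c where "c = (\<bar>M\<bar> + 1) / l g"
  have "c *\<^sub>R g \<in> \<Gamma>"
    using assms(1,3) pos unfolding pos_cone_def c_def by simp
  then have "ereal (l (c *\<^sub>R g)) \<le> ereal M"
    using M unfolding support_fun_def by (meson SUP_upper order_trans)
  moreover have "l (c *\<^sub>R g) = \<bar>M\<bar> + 1"
    using linear_cmul[OF lin] pos unfolding c_def by simp
  ultimately show False by simp
qed

lemma minkowski_sum_pos_cone_bounded_above: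
  assumes "pos_cone \<Gamma>" and l: "l \<in> fin_support \<Gamma>"
    and S: "\<forall>x\<in>S. l x \<le> c" and z: "z \<in> minkowski_sum S \<Gamma>"
  shows "l z \<le> c"
proof -
  obtain s g where z_eq: "z = s + g" and "s \<in> S" "g \<in> \<Gamma>"
    using z unfolding minkowski_sum_def by blast
  have "linear l" using l unfolding fin_support_def dual_space_def by simp
  then have "l z = l s + l g" by (simp add: z_eq linear_add)
  also have "\<dots> \<le> c + 0"
    using bspec[OF S \<open>s \<in> S\<close>] fin_support_pos_cone_nonpos[OF assms(1) l \<open>g \<in> \<Gamma>\<close>] by (rule add_mono)
  finally show ?thesis by simp
qed

lemma separating_linear_functional_closed_point:
  fixes S :: "'a::euclidean_space set"
  assumes "convex S" and "closed S" and "z \<notin> S"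
  obtains l :: "'a \<Rightarrow> real" and c :: real where "linear l" and "\<forall>x\<in>S. l x \<le> c" and "l z > c"
proof -
  obtain a b where "inner a z < b" and "\<forall>x\<in>S. inner a x > b"
    using separating_hyperplane_closed_point[OF assms] by blast
  then have "\<forall>x\<in>S. inner (- a) x \<le> - b" and "inner (- a) z > - b"
    by (auto simp: less_imp_le)
  with bounded_linear.linear[OF bounded_linear_inner_right] show thesis by (rule that)
qed

theorem lemma2p24:
  fixes S :: "'a::euclidean_space set" and \<C> :: "'a set set"
  assumes "\<forall>\<Gamma>\<in>\<C>. pos_cone \<Gamma> \<and> 0 \<in> \<Gamma>"
    and "closed S" and "convex S"
    and "fin_support S \<subseteq> (\<Union>\<Gamma>\<in>\<C>. fin_support \<Gamma>)"
  shows "S = (\<Inter>\<Gamma>\<in>\<C>. minkowski_sum S \<Gamma>)"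
proof
  show "S \<subseteq> (\<Inter>\<Gamma>\<in>\<C>. minkowski_sum S \<Gamma>)"
  proof (rule INT_greatest)
    fix \<Gamma> assume "\<Gamma> \<in> \<C>"
    with assms(1) show "S \<subseteq> minkowski_sum S \<Gamma>" by (simp add: subset_minkowski_sum_if_zero_mem)
  qed
  show "(\<Inter>\<Gamma>\<in>\<C>. minkowski_sum S \<Gamma>) \<subseteq> S"
  proof
    fix z assume z: "z \<in> (\<Inter>\<Gamma>\<in>\<C>. minkowski_sum S \<Gamma>)"
    show "z \<in> S"
    proof (rule ccontr)
      assume "z \<notin> S"
      then obtain l :: "'a \<Rightarrow> real" and c :: real where "linear l" and bound: "\<forall>x\<in>S. l x \<le> c" and "l z > c"
        using separating_linear_functional_closed_point[OF assms(3,2)] by blast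
      have "l \<in> fin_support S" using \<open>linear l\<close> bound by (rule fin_support_if_bounded_above)
      with assms(4) obtain \<Gamma> where "\<Gamma> \<in> \<C>" and l: "l \<in> fin_support \<Gamma>" by blast
      then have cone: "pos_cone \<Gamma>" using assms(1) by simp
      have "z \<in> minkowski_sum S \<Gamma>" using z \<open>\<Gamma> \<in> \<C>\<close> by (rule INT_D)
      then have "l z \<le> c" by (rule minkowski_sum_pos_cone_bounded_above[OF cone l bound])
      with \<open>l z > c\<close> show False by simp
    qed
  qed
qed

end
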